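(* Let $P=MN_P$ be a standard parabolic subgroup of $G$, $\pi\in\Pi_{\mathrm{disc}}(M)$, let $Q\subset R$ be standard parabolic subgroups of $G$ and let $w\in{}_QW_P$ with $P_\pi\subset P_w$. Then for every $\gamma^\vee\in\Delta_R^\vee\cap w\mathfrak a_0^P$ we have $\langle w\nu^P_{P_w},\gamma^\vee\rangle<0$.
   Context: $F$ is a number field, $G=\mathrm{GL}_n$ over $F$, $P_0$ the upper triangular Borel, $W\cong\mathfrak S_n$ the Weyl group, $\mathfrak a_0=\mathbb R^n$ with standard inner product, identified with its dual. For standard $S$: $\mathfrak a_S\subset\mathfrak a_0$, $\mathfrak a_0^S$ is the orthogonal complement of $\mathfrak a_S$ (kernel of the projection $\mathfrak a_0\to\mathfrak a_S$), $\Delta_S^\vee$ the set of simple coroots of $S$ (projections to $\mathfrak a_S$ of the coroots of simple roots of $P_0$ not in $M_S$), $\rho_S^{S'}$ for $S\subset S'$ the half-sum of roots of $A_S$ in $M_{S'}\cap N_S$. ${}_QW_P$ is the set of $w\in W$ with $M_P\cap w^{-1}P_0w=M_P\cap P_0$ and $M_Q\cap wP_0w^{-1}=M_Q\cap P_0$; $P_w=(M_P\cap w^{-1}Qw)N_P$. $\Pi_{\mathrm{disc}}(M)$ is the set of discrete automorphic representations of $M(\mathbb A)$ with central character trivial on $A_M^\infty$. Write $M=G_{n_1}\times\dots\times G_{n_k}$, $\pi=\boxtimes_i\pi_i$; by Moeglin–Waldspurger there are integers $r_i,d_i$ with $n_i=r_id_i$ and cuspidal $\sigma_i$ of $\mathrm{GL}_{r_i}$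 with $\pi_i$ the residual representation attached to $\sigma_i^{\otimes d_i}$; $P_\pi\subset P$ is the standard parabolic with $P_\pi\cap M=\prod P_{\pi_i}$, $P_{\pi_i}$ standard in $\mathrm{GL}_{n_i}$ with Levi $\mathrm{GL}_{r_i}^{d_i}$. For $P_\pi\subset S\subset P$ with $S\cap M=\prod S_i$, $\nu^P_S=(-\rho^{\mathrm{GL}_{n_i}}_{S_i}/r_i)_i\in\mathfrak a_S^{P,*}$. *)

theory Defs
  imports Complex_Main "HOL-Combinatorics.Permutations"
begin

(* Coordinates of a_0 = R^n are indexed by {0..<n}; vectors are nat => real
   (only values on {..<n} matter). A standard parabolic of GL_n is encoded by the
   composition (n_1,...,n_k) of n giving the block sizes of its standard Levi. *)

definition is_comp :: "nat \<Rightarrow> nat list \<Rightarrow> bool" where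
  "is_comp n ns \<longleftrightarrow> (\<forall>m\<in>set ns. 0 < m) \<and> sum_list ns = n"

definition cuts :: "nat list \<Rightarrow> nat set" where
  "cuts ns = (\<lambda>j. sum_list (take j ns)) ` {1..<length ns}"

(* index of the block containing position a *)
definition blk :: "nat list \<Rightarrow> nat \<Rightarrow> nat" where
  "blk ns a = card {c \<in> cuts ns. c \<le> a}"

definition blkrel :: "nat list \<Rightarrow> nat \<Rightarrow> nat \<Rightarrow> bool" where
  "blkrel ns a b \<longleftrightarrow> blk ns a = blk ns b"

(* containment S \<subseteq> S' of standard parabolics, given by their block relations *)
definition psub :: "nat \<Rightarrow> (nat \<Rightarrow> nat \<Rightarrow> bool) \<Rightarrow> (nat \<Rightarrow> nat \<Rightarrow> bool) \<Rightarrow> bool" where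
  "psub n S S' \<longleftrightarrow> (\<forall>a<n. \<forall>b<n. S a b \<longrightarrow> S' a b)"

(* w acts on a_0 by e_i \<mapsto> e_(w i) *)
definition wact :: "(nat \<Rightarrow> nat) \<Rightarrow> (nat \<Rightarrow> real) \<Rightarrow> nat \<Rightarrow> real" where
  "wact w v = (\<lambda>c. v (inv w c))"

definition in_QWP :: "nat \<Rightarrow> nat list \<Rightarrow> nat list \<Rightarrow> (nat \<Rightarrow> nat) \<Rightarrow> bool" where
  "in_QWP n Q P w \<longleftrightarrow> w permutes {..<n}
     \<and> (\<forall>a<n. \<forall>b<n. a < b \<and> blkrel P a b \<longrightarrow> w a < w b)
     \<and> (\<forall>a<n. \<forall>b<n. a < b \<and> blkrel Q a b \<longrightarrow> inv w a < inv w b)"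

(* block relation of P_w = (M_P \<inter> w^-1 Q w) N_P, Levi M_P \<inter> w^-1 M_Q w *)
definition Pw_rel :: "nat list \<Rightarrow> nat list \<Rightarrow> (nat \<Rightarrow> nat) \<Rightarrow> nat \<Rightarrow> nat \<Rightarrow> bool" where
  "Pw_rel P Q w = (\<lambda>a b. blkrel P a b \<and> blkrel Q (w a) (w b))"

(* composition of P_pi: block i of P (size r_i d_i) split into d_i blocks of size r_i *)
definition Ppi_comp :: "nat list \<Rightarrow> nat list \<Rightarrow> nat list" where
  "Ppi_comp rs ds = concat (map2 (\<lambda>r d. replicate d r) rs ds)"

(* orthogonal projection a_0 \<rightarrow> a_S (averaging over the blocks of S) *)
definition proj :: "nat \<Rightarrow> (nat \<Rightarrow> nat \<Rightarrow> bool) \<Rightarrow> (nat \<Rightarrow> real) \<Rightarrow> nat \<Rightarrow> real" where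
  "proj n S v = (\<lambda>x. (\<Sum>y\<in>{y. y < n \<and> S x y}. v y) / real (card {y. y < n \<and> S x y}))"

(* rho_S^{S'}: half-sum of the roots of A_S in M_{S'} \<inter> N_S,
   i.e. projection to a_S of half the sum of e_x - e_y over x<y in the same
   S'-block and different S-blocks *)
definition rho :: "nat \<Rightarrow> (nat \<Rightarrow> nat \<Rightarrow> bool) \<Rightarrow> (nat \<Rightarrow> nat \<Rightarrow> bool) \<Rightarrow> nat \<Rightarrow> real" where
  "rho n S S' = proj n S (\<lambda>c. (1/2) * (\<Sum>(x,y)\<in>{(x,y). x < y \<and> y < n \<and> S' x y \<and> \<not> S x y}.
        (if c = x then 1 else 0) - (if c = y then 1 else 0)))"

definition nu :: "nat \<Rightarrow> nat list \<Rightarrow> nat list \<Rightarrow> (nat \<Rightarrow> nat \<Rightarrow> bool) \<Rightarrow> nat \<Rightarrow> real" where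
  "nu n P rs S = (\<lambda>a. - rho n S (blkrel P) a / real (rs ! blk P a))"

(* simple coroot of R at the block boundary between c-1 and c (c \<in> cuts R):
   projection to a_R of e_(c-1) - e_c *)
definition coroot :: "nat \<Rightarrow> nat list \<Rightarrow> nat \<Rightarrow> nat \<Rightarrow> real" where
  "coroot n R c = proj n (blkrel R) (\<lambda>x. (if x = c - 1 then 1 else 0) - (if x = c then 1 else 0))"

definition simple_coroots :: "nat \<Rightarrow> nat list \<Rightarrow> (nat \<Rightarrow> real) set" where
  "simple_coroots n R = coroot n R ` cuts R"

(* membership in w a_0^P, where a_0^P = kernel of the projection to a_P *)
definition in_w_a0P :: "nat \<Rightarrow> nat list \<Rightarrow> (nat \<Rightarrow> nat) \<Rightarrow> (nat \<Rightarrow> real) \<Rightarrow> bool" where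
  "in_w_a0P n P w g \<longleftrightarrow> (\<exists>x. (\<forall>a<n. proj n (blkrel P) x a = 0) \<and> (\<forall>c<n. g c = wact w x c))"

definition pairing :: "nat \<Rightarrow> (nat \<Rightarrow> real) \<Rightarrow> (nat \<Rightarrow> real) \<Rightarrow> real" where
  "pairing n u v = (\<Sum>c<n. u c * v c)"

end

theory Submission
  imports Defs
begin

(* Put h = g \<circ> w. Since g lies in w a_0^P, h sums to zero over every block of P; since g is the
   simple coroot of R at a cut c, it is positive only on the R-block ending at c - 1 and negative
   only on the R-block starting at c, and Q refines R. The pairing therefore splits over the blocks
   of P into sums -(1/r_i) \<Sum>_a \<rho>(a) h(a) with \<rho> = \<rho>^P_{P_w}, and a sum \<Sum> \<rho> h with \<Sum> h = 0 is
   nonnegative, and positive unless h vanishes, as soon as \<rho> is larger wherever h is positive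
   than wherever h is negative.
   That separation is a count of roots: if a, b lie in one block of P and w a lies in an earlier
   block of Q than w b, then among the roots e_x - e_y of M_P outside P_w, b occurs as x strictly
   less often and as y at least as often as a; averaging over the blocks of P_w keeps the strict
   inequality. *)

lemma sum_mult_pos_if_sum_zero:
  fixes h r :: "'a \<Rightarrow> real"
  assumes fin: "finite J" and sum_zero: "(\<Sum>a\<in>J. h a) = 0"
    and sep: "\<And>a b. a \<in> J \<Longrightarrow> b \<in> J \<Longrightarrow> 0 < h a \<Longrightarrow> h b < 0 \<Longrightarrow> r b < r a"
    and nonzero: "a0 \<in> J" "h a0 \<noteq> 0"
  shows "0 < (\<Sum>a\<in>J. r a * h a)"
proof -
  have ex_pos: "\<exists>a\<in>J. 0 < h a"
  proof (rule ccontr)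
    assume "\<not> ?thesis"
    then have "0 \<le> - h a" if "a \<in> J" for a using that by auto
    from sum_nonneg_eq_0_iff[OF fin this] have "\<forall>a\<in>J. - h a = 0"
      using sum_zero by (simp add: sum_negf)
    then show False using nonzero by simp
  qed
  have ex_neg: "\<exists>b\<in>J. h b < 0"
  proof (rule ccontr)
    assume "\<not> ?thesis"
    then have "0 \<le> h a" if "a \<in> J" for a using that by auto
    from sum_nonneg_eq_0_iff[OF fin this] have "\<forall>a\<in>J. h a = 0"
      using sum_zero by simp
    then show False using ex_pos by auto
  qed
  \<comment> \<open>With t the least value of r where h is positive, every term (r a - t) h a is nonnegative.\<close>
  define Pos where "Pos = {a\<in>J. 0 < h a}"
  define t where "t = Min (r ` Pos)"
  have "finite Pos" "Pos \<noteq> {}" using fin ex_pos by (auto simp: Pos_def)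
  then have t_le: "a \<in> Pos \<Longrightarrow> t \<le> r a" and "t \<in> r ` Pos" for a
    by (simp_all add: t_def)
  then have less_t: "b \<in> J \<Longrightarrow> h b < 0 \<Longrightarrow> r b < t" for b
    using sep by (auto simp: Pos_def)
  have term_nonneg: "0 \<le> (r a - t) * h a" if "a \<in> J" for a
  proof (cases "0 < h a")
    case True
    then show ?thesis using t_le[of a] that by (simp add: Pos_def)
  next
    case False
    then show ?thesis
      using less_t[of a] that by (cases "h a = 0") (simp_all add: mult_nonpos_nonpos)
  qed
  obtain b where b: "b \<in> J" "h b < 0" using ex_neg by blast
  have "0 < (\<Sum>a\<in>J. (r a - t) * h a)"
  proof (rule sum_pos2[OF fin b(1)])
    show "0 < (r b - t) * h b" using less_t[OF b] b(2) by (simp add: mult_neg_neg)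
  qed (rule term_nonneg)
  also have "\<dots> = (\<Sum>a\<in>J. r a * h a)"
    using sum_zero by (simp add: left_diff_distrib sum_subtractf sum_distrib_left[symmetric])
  finally show ?thesis .
qed

lemma sum_mult_nonneg_if_sum_zero:
  fixes h r :: "'a \<Rightarrow> real"
  assumes "finite J" "(\<Sum>a\<in>J. h a) = 0"
    and "\<And>a b. a \<in> J \<Longrightarrow> b \<in> J \<Longrightarrow> 0 < h a \<Longrightarrow> h b < 0 \<Longrightarrow> r b < r a"
  shows "0 \<le> (\<Sum>a\<in>J. r a * h a)"
proof (cases "\<exists>a\<in>J. h a \<noteq> 0")
  case True
  then show ?thesis using sum_mult_pos_if_sum_zero[OF assms] by (auto intro: less_imp_le)
qed simp

lemma sum_blockwise_pos:
  fixes h r :: "'a \<Rightarrow> real" and block :: "'a \<Rightarrow> 'b" and c :: "'b \<Rightarrow> real"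
  assumes fin: "finite A"
    and block_sum_zero: "\<And>i. (\<Sum>a\<in>{a\<in>A. block a = i}. h a) = 0"
    and sep: "\<And>a b. a \<in> A \<Longrightarrow> b \<in> A \<Longrightarrow> block a = block b \<Longrightarrow> 0 < h a \<Longrightarrow> h b < 0 \<Longrightarrow> r b < r a"
    and c_pos: "\<And>a. a \<in> A \<Longrightarrow> 0 < c (block a)"
    and nonzero: "a0 \<in> A" "h a0 \<noteq> 0"
  shows "0 < (\<Sum>a\<in>A. r a * h a / c (block a))"
proof -
  let ?B = "\<lambda>i. {a\<in>A. block a = i}"
  have block_sum: "(\<Sum>a\<in>?B i. r a * h a / c (block a)) = (\<Sum>a\<in>?B i. r a * h a) / c i" for i
    by (simp add: sum_divide_distrib)
  have "0 \<le> (\<Sum>a\<in>?B i. r a * h a)" for i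
    using fin sep by (intro sum_mult_nonneg_if_sum_zero block_sum_zero) auto
  moreover have "0 < (\<Sum>a\<in>?B (block a0). r a * h a)"
    using fin sep nonzero by (intro sum_mult_pos_if_sum_zero block_sum_zero) auto
  moreover have "i \<in> block ` A \<Longrightarrow> 0 < c i" for i using c_pos by blast
  ultimately have "0 < (\<Sum>i\<in>block ` A. \<Sum>a\<in>?B i. r a * h a / c (block a))"
    unfolding block_sum using fin nonzero by (intro sum_pos2) (auto intro: divide_nonneg_pos)
  also have "\<dots> = (\<Sum>a\<in>A. r a * h a / c (block a))"
    using fin by (intro sum.group) auto
  finally show ?thesis .
qed

lemma mean_less_mean:
  fixes f :: "'a \<Rightarrow> real"
  assumes "finite X" "X \<noteq> {}" "finite Y" "Y \<noteq> {}"
    and less: "\<And>x y. x \<in> X \<Longrightarrow> y \<in> Y \<Longrightarrow> f y < f x"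
  shows "(\<Sum>y\<in>Y. f y) / card Y < (\<Sum>x\<in>X. f x) / card X"
proof -
  define m where "m = Min (f ` X)"
  have "m \<in> f ` X" and m_le: "x \<in> X \<Longrightarrow> m \<le> f x" for x
    using assms(1,2) by (simp_all add: m_def)
  then have "(\<Sum>y\<in>Y. f y) < card Y * m"
    using less assms(3,4) sum_strict_mono[of Y f "\<lambda>_. m"] by auto
  moreover have "card X * m \<le> (\<Sum>x\<in>X. f x)"
    using m_le sum_mono[of X "\<lambda>_. m" f] by auto
  moreover have "0 < card X" "0 < card Y" using assms(1-4) by (simp_all add: card_gt_0_iff)
  ultimately have "(\<Sum>y\<in>Y. f y) / card Y < m" "m \<le> (\<Sum>x\<in>X. f x) / card X"
    by (simp_all add: divide_less_eq le_divide_eq mult.commute)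
  then show ?thesis by linarith
qed

lemma sum_pair_indicator_diff:
  fixes D :: "('a \<times> 'a) set"
  assumes "finite D"
  shows "(\<Sum>(x,y)\<in>D. (if c = x then 1 else 0) - (if c = y then 1 else 0) :: real)
       = real (card {y. (c,y) \<in> D}) - real (card {x. (x,c) \<in> D})"
proof -
  have "{p\<in>D. fst p = c} = Pair c ` {y. (c,y) \<in> D}"
    "{p\<in>D. snd p = c} = (\<lambda>x. (x,c)) ` {x. (x,c) \<in> D}"
    by force+
  then have "card {p\<in>D. fst p = c} = card {y. (c,y) \<in> D}"
    "card {p\<in>D. snd p = c} = card {x. (x,c) \<in> D}"
    by (simp_all add: card_image inj_on_def)
  moreover have "(\<Sum>p\<in>D. if c = fst p then 1 else 0 :: real) = card {p\<in>D. fst p = c}"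
    "(\<Sum>p\<in>D. if c = snd p then 1 else 0 :: real) = card {p\<in>D. snd p = c}"
    using sum.inter_filter[OF assms, of "\<lambda>_. 1::real"] by (simp_all add: eq_commute)
  ultimately show ?thesis by (simp add: case_prod_beta sum_subtractf)
qed

lemma blk_mono: "x \<le> y \<Longrightarrow> blk ns x \<le> blk ns y"
  unfolding blk_def by (rule card_mono) (auto simp: cuts_def)

lemma less_if_blk_less: "blk ns x < blk ns y \<Longrightarrow> x < y"
  by (meson blk_mono leD not_le)

lemma blk_pred_cut_less:
  assumes "c \<in> cuts ns" "0 < c"
  shows "blk ns (c - 1) < blk ns c"
  unfolding blk_def
proof (rule psubset_card_mono)
  show "finite {x \<in> cuts ns. x \<le> c}" by (simp add: cuts_def)
  have "c \<in> {x \<in> cuts ns. x \<le> c}" "c \<notin> {x \<in> cuts ns. x \<le> c - 1}" using assms by auto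
  then show "{x \<in> cuts ns. x \<le> c - 1} \<subset> {x \<in> cuts ns. x \<le> c}" by auto
qed

lemma cuts_bounds:
  assumes "is_comp n ns" "c \<in> cuts ns"
  shows "0 < c" "c < n"
proof -
  obtain j where j: "1 \<le> j" "j < length ns" and c: "c = sum_list (take j ns)"
    using assms(2) by (auto simp: cuts_def)
  have sum_pos: "0 < sum_list xs" if "xs \<noteq> []" "set xs \<subseteq> set ns" for xs
  proof -
    have "hd xs \<in> set xs" using that(1) by simp
    moreover have "0 < hd xs" using assms(1) that(2) \<open>hd xs \<in> set xs\<close> unfolding is_comp_def by blast
    ultimately show ?thesis using member_le_sum_list order.strict_trans2 by blast
  qed
  have "0 < sum_list (take j ns)" "0 < sum_list (drop j ns)"
    using j by (auto intro!: sum_pos dest: in_set_takeD in_set_dropD)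
  moreover have "sum_list ns = sum_list (take j ns) + sum_list (drop j ns)"
    by (metis append_take_drop_id sum_list_append)
  ultimately show "0 < c" "c < n" using assms(1) c by (simp_all add: is_comp_def)
qed

lemma blk_less_length:
  assumes "is_comp n ns" "z < n"
  shows "blk ns z < length ns"
proof -
  have "ns \<noteq> []" using assms by (auto simp: is_comp_def)
  have "blk ns z \<le> card (cuts ns)" unfolding blk_def by (rule card_mono) (auto simp: cuts_def)
  also have "\<dots> \<le> card {1..<length ns}" unfolding cuts_def by (rule card_image_le) simp
  finally show ?thesis using \<open>ns \<noteq> []\<close> by (cases ns) auto
qed

lemma blk_less_if_refines:
  assumes "psub n (blkrel Q) (blkrel R)" "x < n" "y < n" "blk R x < blk R y"
  shows "blk Q x < blk Q y"
proof -
  have "blk Q x \<le> blk Q y" using less_if_blk_less[OF assms(4)] by (simp add: blk_mono)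
  moreover have "blk Q x \<noteq> blk Q y"
  proof
    assume "blk Q x = blk Q y"
    then have "blkrel R x y" using assms(1-3) unfolding psub_def blkrel_def by blast
    then show False using assms(4) by (simp add: blkrel_def)
  qed
  ultimately show ?thesis by simp
qed

lemma proj_pos_imp_ex:
  assumes "0 < proj n S v x"
  shows "\<exists>y<n. S x y \<and> 0 < v y"
proof (rule ccontr)
  assume "\<not> ?thesis"
  then have "(\<Sum>y\<in>{y. y < n \<and> S x y}. v y) \<le> 0" by (intro sum_nonpos) auto
  then show False using assms by (simp add: proj_def divide_nonpos_nonneg leD)
qed

lemma proj_neg_imp_ex:
  assumes "proj n S v x < 0"
  shows "\<exists>y<n. S x y \<and> v y < 0"
proof (rule ccontr)
  assume "\<not> ?thesis"
  then have "0 \<le> (\<Sum>y\<in>{y. y < n \<and> S x y}. v y)" by (intro sum_nonneg) auto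
  then show False using assms by (simp add: proj_def leD)
qed

lemma coroot_pos_neg_blk_less:
  assumes "c \<in> cuts R" "0 < coroot n R c x" "coroot n R c y < 0"
  shows "blk R x < blk R y"
proof -
  let ?e = "\<lambda>z. (if z = c - 1 then 1 else 0) - (if z = c then 1 else 0) :: real"
  obtain x' where "blkrel R x x'" "0 < ?e x'"
    using proj_pos_imp_ex[of n "blkrel R"] assms(2) unfolding coroot_def by blast
  then have "blk R x = blk R (c - 1)" "0 < c" by (auto simp: blkrel_def split: if_splits)
  moreover obtain y' where "blkrel R y y'" "?e y' < 0"
    using proj_neg_imp_ex[of n "blkrel R"] assms(3) unfolding coroot_def by blast
  then have "blk R y = blk R c" by (auto simp: blkrel_def split: if_splits)
  ultimately show ?thesis using blk_pred_cut_less[OF assms(1)] by simp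
qed

lemma coroot_pred_cut_pos:
  assumes "is_comp n R" "c \<in> cuts R"
  shows "0 < coroot n R c (c - 1)"
proof -
  let ?B = "{y. y < n \<and> blkrel R (c - 1) y}"
  have "0 < c" "c < n" using cuts_bounds[OF assms] by simp_all
  then have "c - 1 \<in> ?B" "c \<notin> ?B"
    using blk_pred_cut_less[OF assms(2)] by (simp_all add: blkrel_def)
  then have "(\<Sum>y\<in>?B. (if y = c - 1 then 1 else 0) - (if y = c then 1 else 0) :: real) = 1"
    by (simp add: sum_subtractf)
  moreover have "0 < card ?B" using \<open>c - 1 \<in> ?B\<close> by (auto simp: card_gt_0_iff)
  ultimately show ?thesis by (simp add: coroot_def proj_def)
qed

lemma pairing_wact:
  assumes "w permutes {..<n}"
  shows "pairing n (wact w u) v = (\<Sum>a<n. u a * v (w a))"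
  unfolding pairing_def wact_def
  by (subst sum.permute[OF assms]) (simp add: permutes_inverses(2)[OF assms])

lemma in_w_a0P_block_sum_zero:
  assumes "w permutes {..<n}" "in_w_a0P n P w g"
  shows "(\<Sum>a\<in>{a\<in>{..<n}. blk P a = i}. g (w a)) = 0"
proof (cases "\<exists>a1<n. blk P a1 = i")
  case True
  then obtain a1 where a1: "a1 < n" "blk P a1 = i" by blast
  obtain x where x0: "\<forall>a<n. proj n (blkrel P) x a = 0" and gx: "\<forall>c<n. g c = wact w x c"
    using assms(2) by (auto simp: in_w_a0P_def)
  have gx_eq: "g (w a) = x a" if "a < n" for a
    using gx permutes_in_image[OF assms(1)] permutes_inverses(2)[OF assms(1)] that
    by (simp add: wact_def)
  have "{a\<in>{..<n}. blk P a = i} = {y. y < n \<and> blkrel P a1 y}"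
    using a1 by (auto simp: blkrel_def)
  then have "(\<Sum>a\<in>{a\<in>{..<n}. blk P a = i}. g (w a)) = (\<Sum>y\<in>{y. y < n \<and> blkrel P a1 y}. x y)"
    using gx_eq by simp
  also have "\<dots> = 0"
    using x0[rule_format, OF a1(1)] a1(1) by (auto simp: proj_def blkrel_def)
  finally show ?thesis .
next
  case False
  then have "{a\<in>{..<n}. blk P a = i} = {}" by auto
  then show ?thesis by (simp only: sum.empty)
qed

definition root_pairs :: "nat \<Rightarrow> (nat \<Rightarrow> nat \<Rightarrow> bool) \<Rightarrow> (nat \<Rightarrow> nat \<Rightarrow> bool) \<Rightarrow> (nat \<times> nat) set" where
  "root_pairs n S T = {(x, y). x < y \<and> y < n \<and> T x y \<and> \<not> S x y}"

text \<open>\<rho>_S^T before the projection to a_S: the c-th coordinate of half the sum of the roots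
  e_x - e_y with (x, y) in root_pairs.\<close>
definition half_root_sum :: "nat \<Rightarrow> (nat \<Rightarrow> nat \<Rightarrow> bool) \<Rightarrow> (nat \<Rightarrow> nat \<Rightarrow> bool) \<Rightarrow> nat \<Rightarrow> real" where
  "half_root_sum n S T c =
     (real (card {y. (c, y) \<in> root_pairs n S T}) - real (card {x. (x, c) \<in> root_pairs n S T})) / 2"

lemma rho_eq_proj_half_root_sum: "rho n S T = proj n S (half_root_sum n S T)"
proof -
  have "finite (root_pairs n S T)"
    by (rule finite_subset[of _ "{..<n} \<times> {..<n}"]) (auto simp: root_pairs_def)
  then show ?thesis
    unfolding rho_def root_pairs_def[symmetric] half_root_sum_def
    by (simp add: sum_pair_indicator_diff)
qed

lemma half_root_sum_Pw_less:
  assumes w_mono: "\<forall>a<n. \<forall>b<n. a < b \<and> blkrel P a b \<longrightarrow> w a < w b"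
    and ab: "a < n" "b < n" "blkrel P a b" and Q_less: "blk Q (w a) < blk Q (w b)"
  shows "half_root_sum n (Pw_rel P Q w) (blkrel P) b < half_root_sum n (Pw_rel P Q w) (blkrel P) a"
proof -
  define D where "D = root_pairs n (Pw_rel P Q w) (blkrel P)"
  have less_if_w_less: "x < y" if "x < n" "y < n" "blkrel P x y" "w x < w y" for x y
  proof (rule ccontr)
    assume "\<not> x < y"
    then have "y < x" using that(4) by (cases "x = y") simp_all
    then show False using w_mono[rule_format, of y x] that by (simp add: blkrel_def)
  qed
  have "a < b" using less_if_w_less[OF ab] less_if_blk_less[OF Q_less] .
  have out_sub: "{y. (b, y) \<in> D} \<subset> {y. (a, y) \<in> D}"
  proof
    show "{y. (b, y) \<in> D} \<subseteq> {y. (a, y) \<in> D}"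
    proof
      fix y assume "y \<in> {y. (b, y) \<in> D}"
      then have y: "b < y" "y < n" "blkrel P b y" by (auto simp: D_def root_pairs_def)
      have "blk Q (w a) \<noteq> blk Q (w y)"
      proof
        assume "blk Q (w a) = blk Q (w y)"
        then have "w y < w b" using Q_less less_if_blk_less by metis
        then show False using less_if_w_less[of y b] y ab by (auto simp: blkrel_def)
      qed
      then show "y \<in> {y. (a, y) \<in> D}"
        using y ab \<open>a < b\<close> by (auto simp: D_def root_pairs_def Pw_rel_def blkrel_def)
    qed
    have "b \<in> {y. (a, y) \<in> D}" "b \<notin> {y. (b, y) \<in> D}"
      using ab \<open>a < b\<close> Q_less by (auto simp: D_def root_pairs_def Pw_rel_def blkrel_def)
    then show "{y. (b, y) \<in> D} \<noteq> {y. (a, y) \<in> D}" by blast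
  qed
  have in_sub: "{x. (x, a) \<in> D} \<subseteq> {x. (x, b) \<in> D}"
  proof
    fix x assume "x \<in> {x. (x, a) \<in> D}"
    then have x: "x < a" "blkrel P x a" by (auto simp: D_def root_pairs_def)
    have "blk Q (w x) \<noteq> blk Q (w b)"
    proof
      assume "blk Q (w x) = blk Q (w b)"
      then have "w a < w x" using Q_less less_if_blk_less by metis
      then show False using less_if_w_less[of a x] x ab by (auto simp: blkrel_def)
    qed
    then show "x \<in> {x. (x, b) \<in> D}"
      using x ab \<open>a < b\<close> by (auto simp: D_def root_pairs_def Pw_rel_def blkrel_def)
  qed
  have "finite {y. (a, y) \<in> D}" "finite {x. (x, b) \<in> D}"
    by (auto simp: D_def root_pairs_def intro: finite_subset[of _ "{..<n}"])
  then have "card {y. (b, y) \<in> D} < card {y. (a, y) \<in> D}"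
    "card {x. (x, a) \<in> D} \<le> card {x. (x, b) \<in> D}"
    using psubset_card_mono out_sub card_mono in_sub by blast+
  then show ?thesis unfolding half_root_sum_def D_def[symmetric] by simp
qed

lemma rho_Pw_less:
  assumes w_mono: "\<forall>a<n. \<forall>b<n. a < b \<and> blkrel P a b \<longrightarrow> w a < w b"
    and ab: "a < n" "b < n" "blkrel P a b" and Q_less: "blk Q (w a) < blk Q (w b)"
  shows "rho n (Pw_rel P Q w) (blkrel P) b < rho n (Pw_rel P Q w) (blkrel P) a"
  unfolding rho_eq_proj_half_root_sum proj_def
proof (rule mean_less_mean)
  have "a \<in> {y. y < n \<and> Pw_rel P Q w a y}" "b \<in> {y. y < n \<and> Pw_rel P Q w b y}"
    using ab by (simp_all add: Pw_rel_def blkrel_def)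
  then show "{y. y < n \<and> Pw_rel P Q w a y} \<noteq> {}" "{y. y < n \<and> Pw_rel P Q w b y} \<noteq> {}"
    by blast+
  show "half_root_sum n (Pw_rel P Q w) (blkrel P) y < half_root_sum n (Pw_rel P Q w) (blkrel P) x"
    if "x \<in> {y. y < n \<and> Pw_rel P Q w a y}" "y \<in> {y. y < n \<and> Pw_rel P Q w b y}" for x y
    using half_root_sum_Pw_less[OF w_mono] that ab Q_less by (simp add: Pw_rel_def blkrel_def)
qed simp_all

lemma rho_Pw_less_at_coroot_signs:
  assumes "in_QWP n Q P w" "psub n (blkrel Q) (blkrel R)" "c \<in> cuts R"
    and ab: "a < n" "b < n" "blkrel P a b"
    and signs: "0 < coroot n R c (w a)" "coroot n R c (w b) < 0"
  shows "rho n (Pw_rel P Q w) (blkrel P) b < rho n (Pw_rel P Q w) (blkrel P) a"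
proof -
  have w_perm: "w permutes {..<n}"
    and w_mono: "\<forall>a<n. \<forall>b<n. a < b \<and> blkrel P a b \<longrightarrow> w a < w b"
    using assms(1) by (simp_all add: in_QWP_def)
  have "blk R (w a) < blk R (w b)" using coroot_pos_neg_blk_less[OF assms(3) signs] .
  then have "blk Q (w a) < blk Q (w b)"
    using blk_less_if_refines[OF assms(2)] permutes_in_image[OF w_perm] ab by simp
  then show ?thesis by (rule rho_Pw_less[OF w_mono ab])
qed

theorem mainTheorem9:
  fixes n :: nat and P Q R rs ds :: "nat list" and w :: "nat \<Rightarrow> nat" and g :: "nat \<Rightarrow> real"
  assumes "is_comp n P"
    and "length rs = length P" and "length ds = length P"
    and "\<forall>i<length P. 0 < rs ! i \<and> 0 < ds ! i \<and> P ! i = rs ! i * ds ! i"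
    and "is_comp n Q" and "is_comp n R"
    and "psub n (blkrel Q) (blkrel R)"
    and "in_QWP n Q P w"
    and "psub n (blkrel (Ppi_comp rs ds)) (Pw_rel P Q w)"
    and "g \<in> simple_coroots n R"
    and "in_w_a0P n P w g"
  shows "pairing n (wact w (nu n P rs (Pw_rel P Q w))) g < 0"
proof -
  have w_perm: "w permutes {..<n}" using assms(8) by (simp add: in_QWP_def)
  obtain c where c: "c \<in> cuts R" and g_def: "g = coroot n R c"
    using assms(10) by (auto simp: simple_coroots_def)
  have "c - 1 < n" using cuts_bounds[OF assms(6) c] by simp
  then have "c - 1 \<in> w ` {..<n}" unfolding permutes_image[OF w_perm] by simp
  then obtain a0 where a0: "c - 1 = w a0" "a0 \<in> {..<n}" by (rule imageE)
  have "0 < (\<Sum>a\<in>{..<n}. rho n (Pw_rel P Q w) (blkrel P) a * g (w a) / real (rs ! blk P a))"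
  proof (rule sum_blockwise_pos[where h = "\<lambda>a. g (w a)" and block = "blk P"
        and c = "\<lambda>i. real (rs ! i)"])
    show "(\<Sum>a\<in>{a\<in>{..<n}. blk P a = i}. g (w a)) = 0" for i
      using in_w_a0P_block_sum_zero[OF w_perm assms(11)] .
    show "rho n (Pw_rel P Q w) (blkrel P) b < rho n (Pw_rel P Q w) (blkrel P) a"
      if "a \<in> {..<n}" "b \<in> {..<n}" "blk P a = blk P b" "0 < g (w a)" "g (w b) < 0" for a b
      using rho_Pw_less_at_coroot_signs[OF assms(8,7) c] that g_def by (simp add: blkrel_def)
    show "0 < real (rs ! blk P a)" if "a \<in> {..<n}" for a
      using assms(4) blk_less_length[OF assms(1)] that by simp
    show "a0 \<in> {..<n}" "g (w a0) \<noteq> 0"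
      using a0 coroot_pred_cut_pos[OF assms(6) c] g_def by simp_all
  qed simp
  then show ?thesis by (simp add: pairing_wact[OF w_perm] nu_def sum_negf)
qed

end
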